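(* Let $0<l<m<\infty$ and let $\beta,\gamma,\mu:[0,m]\times\mathbb{R}^2_+\to[0,\infty)$ be continuous, with $\beta(s,\cdot,\cdot)=0$ for $s<l$, $\gamma$ continuously differentiable in $s$ with $\partial_s\gamma$ continuous, and $\gamma\ge\gamma_0>0$. Assume there is $\varepsilon>0$ with $\int_{m-\varepsilon}^m\beta(s,J,A)\,ds>0$ for all $(J,A)\in\mathbb{R}^2_+$. For $(J,A)\in\mathbb{R}^2_+$ define $\Psi_{(J,A)}p=-(\gamma(\cdot,J,A)p)_s-\mu(\cdot,J,A)p$ on $D(\Psi_{(J,A)})=\{p\in W^{1,1}(0,m) : \gamma(0,J,A)p(0)=\int_l^m\beta(s,J,A)p(s)\,ds\}\subset L^1(0,m)$. Assume there exist $0<r<R<\infty$ such that $s(\Psi_{(J,A)})>0$ whenever $J+A\le r$ and $s(\Psi_{(J,A)})<0$ whenever $J+A\ge R$. Then the model $p_t+(\gamma(s,J(t),A(t))p)_s=-\mu(s,J(t),A(t))p$, $\gamma(0,J(t),A(t))p(0,t)=\int_l^m\beta(s,J(t),A(t))p(s,t)\,ds$, with $J(t)=\int_0^lp(s,t)ds$, $A(t)=\int_l^mp(s,t)ds$, admits a positive steady state: there is $p\in D(\Psi_{(J,A)})$, $p\ge0$, $p\neq0$, with $(J,A)=(\int_0^lp,\int_l^mp)$ and $\Psi_{(J,A)}p=0$.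
   Context: $s(T)=\sup\{\operatorname{Re}\lambda:\lambda\in\sigma(T)\}$ denotes the spectral bound of a closed operator $T$. *)

theory Defs
  imports "HOL-Analysis.Analysis"
begin

text \<open>Functions on [0,m] are represented by (complex-valued) representatives
  p :: real \<Rightarrow> complex; L^1(0,m) = absolutely integrable on {0..m},
  equality in L^1 = equality outside a negligible set.\<close>

text \<open>W^{1,1}(0,m): p is absolutely continuous on [0,m], i.e. p is the
  indefinite integral of an L^1 function q (its weak derivative).\<close>
definition W11 :: "real \<Rightarrow> (real \<Rightarrow> complex) \<Rightarrow> bool" where
  "W11 m p \<longleftrightarrow> (\<exists>q. q absolutely_integrable_on {0..m} \<and>
      (\<forall>x\<in>{0..m}. p x = p 0 + integral {0..x} q))"

definition psi_dom ::
  "(real \<Rightarrow> real \<Rightarrow> real \<Rightarrow> real) \<Rightarrow> (real \<Rightarrow> real \<Rightarrow> real \<Rightarrow> real) \<Rightarrow> real \<Rightarrow> real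
   \<Rightarrow> real \<Rightarrow> real \<Rightarrow> (real \<Rightarrow> complex) \<Rightarrow> bool" where
  "psi_dom \<beta> \<gamma> l m J A p \<longleftrightarrow> W11 m p \<and>
     complex_of_real (\<gamma> 0 J A) * p 0 = integral {l..m} (\<lambda>s. complex_of_real (\<beta> s J A) * p s)"

text \<open>Graph of Psi_(J,A): p \<in> D(Psi) and Psi p = f in L^1(0,m), where
  Psi p = -(\<gamma> p)_s - \<mu> p = -(\<gamma>s p + \<gamma> p') - \<mu> p, with \<gamma>s = \<partial>_s \<gamma> and p' the weak derivative.\<close>
definition psi_graph ::
  "(real \<Rightarrow> real \<Rightarrow> real \<Rightarrow> real) \<Rightarrow> (real \<Rightarrow> real \<Rightarrow> real \<Rightarrow> real) \<Rightarrow>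
   (real \<Rightarrow> real \<Rightarrow> real \<Rightarrow> real) \<Rightarrow> (real \<Rightarrow> real \<Rightarrow> real \<Rightarrow> real) \<Rightarrow> real \<Rightarrow> real
   \<Rightarrow> real \<Rightarrow> real \<Rightarrow> (real \<Rightarrow> complex) \<Rightarrow> (real \<Rightarrow> complex) \<Rightarrow> bool" where
  "psi_graph \<beta> \<gamma> \<gamma>s \<mu> l m J A p f \<longleftrightarrow> psi_dom \<beta> \<gamma> l m J A p \<and>
     f absolutely_integrable_on {0..m} \<and>
     (\<exists>q. q absolutely_integrable_on {0..m} \<and>
        (\<forall>x\<in>{0..m}. p x = p 0 + integral {0..x} q) \<and>
        negligible {s\<in>{0..m}. f s \<noteq>
           - (complex_of_real (\<gamma>s s J A) * p s + complex_of_real (\<gamma> s J A) * q s)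
           - complex_of_real (\<mu> s J A) * p s})"

text \<open>Resolvent set: \<lambda> - Psi is onto L^1 and has a bounded inverse
  (bounded below, hence injective).\<close>
definition psi_resolvent ::
  "(real \<Rightarrow> real \<Rightarrow> real \<Rightarrow> real) \<Rightarrow> (real \<Rightarrow> real \<Rightarrow> real \<Rightarrow> real) \<Rightarrow>
   (real \<Rightarrow> real \<Rightarrow> real \<Rightarrow> real) \<Rightarrow> (real \<Rightarrow> real \<Rightarrow> real \<Rightarrow> real) \<Rightarrow> real \<Rightarrow> real
   \<Rightarrow> real \<Rightarrow> real \<Rightarrow> complex \<Rightarrow> bool" where
  "psi_resolvent \<beta> \<gamma> \<gamma>s \<mu> l m J A z \<longleftrightarrow>
     (\<forall>g. g absolutely_integrable_on {0..m} \<longrightarrow>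
        (\<exists>p f. psi_graph \<beta> \<gamma> \<gamma>s \<mu> l m J A p f \<and>
               negligible {s\<in>{0..m}. z * p s - f s \<noteq> g s})) \<and>
     (\<exists>C. \<forall>p f. psi_graph \<beta> \<gamma> \<gamma>s \<mu> l m J A p f \<longrightarrow>
        integral {0..m} (\<lambda>s. norm (p s)) \<le> C * integral {0..m} (\<lambda>s. norm (z * p s - f s)))"

definition psi_spectrum ::
  "(real \<Rightarrow> real \<Rightarrow> real \<Rightarrow> real) \<Rightarrow> (real \<Rightarrow> real \<Rightarrow> real \<Rightarrow> real) \<Rightarrow>
   (real \<Rightarrow> real \<Rightarrow> real \<Rightarrow> real) \<Rightarrow> (real \<Rightarrow> real \<Rightarrow> real \<Rightarrow> real) \<Rightarrow> real \<Rightarrow> real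
   \<Rightarrow> real \<Rightarrow> real \<Rightarrow> complex set" where
  "psi_spectrum \<beta> \<gamma> \<gamma>s \<mu> l m J A = {z. \<not> psi_resolvent \<beta> \<gamma> \<gamma>s \<mu> l m J A z}"

text \<open>Spectral bound s(T) = sup{Re \<lambda> : \<lambda> \<in> \<sigma>(T)} in the extended reals
  (= -\<infinity> for empty spectrum).\<close>
definition psi_spectral_bound ::
  "(real \<Rightarrow> real \<Rightarrow> real \<Rightarrow> real) \<Rightarrow> (real \<Rightarrow> real \<Rightarrow> real \<Rightarrow> real) \<Rightarrow>
   (real \<Rightarrow> real \<Rightarrow> real \<Rightarrow> real) \<Rightarrow> (real \<Rightarrow> real \<Rightarrow> real \<Rightarrow> real) \<Rightarrow> real \<Rightarrow> real
   \<Rightarrow> real \<Rightarrow> real \<Rightarrow> ereal" where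
  "psi_spectral_bound \<beta> \<gamma> \<gamma>s \<mu> l m J A =
     Sup ((\<lambda>z. ereal (Re z)) ` psi_spectrum \<beta> \<gamma> \<gamma>s \<mu> l m J A)"

end

theory Submission
  imports Defs
begin

text \<open>
  For fixed population levels (J, A) the eigenvalue problem for the operator
  Psi_(J,A) is a first order linear ODE on [0,m] with a nonlocal boundary condition.
  Solving the ODE by variation of constants, everything is governed by the
  net reproduction function
     R(J,A,c) = integral_l^m beta(s,J,A) * exp(-integral_0^s (gamma_s + mu + c)/gamma),
  compared with gamma(0,J,A):
    * if R(J,A,0) < gamma(0,J,A), every z with Re z >= 0 is in the resolvent set,
      so s(Psi_(J,A)) <= 0;
    * if R(J,A,0) > gamma(0,J,A), the intermediate value theorem gives c > 0 with
      R(J,A,c) = gamma(0,J,A), and c is an eigenvalue, so s(Psi_(J,A)) > 0.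
  Hence R(J,A,0) >= gamma(0,J,A) when J + A <= r and R(J,A,0) <= gamma(0,J,A)
  when J + A >= R. Writing (J, A) = (x sigma, (1 - x) sigma) with x in [0,1],
  sigma in [r,R], Brouwer's fixed point theorem applied to a clamped continuous map
  on the rectangle yields (J, A) with R(J,A,0) = gamma(0,J,A) and with the
  survival profile splitting its mass between [0,l] and [l,m] in the ratio J : A.
  A suitable multiple of that profile is the desired steady state.
\<close>

section \<open>Linear first-order ODEs on an interval\<close>

definition prim :: "(real \<Rightarrow> complex) \<Rightarrow> real \<Rightarrow> complex" where
  "prim a x = integral {0..x} a"

lemma prim_0 [simp]: "prim a 0 = 0"
  by (simp add: prim_def)

lemma prim_deriv:
  assumes "continuous_on {0..m} a" "x \<in> {0..m}"
  shows "(prim a has_vector_derivative a x) (at x within {0..m})"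
  unfolding prim_def using integral_has_vector_derivative[OF assms] .

lemma continuous_on_prim:
  assumes "continuous_on {0..m} a"
  shows "continuous_on {0..m} (prim a)"
  using continuous_on_vector_derivative[of "{0..m}" "prim a" a] prim_deriv[OF assms] by blast

lemma exp_prim_deriv:
  assumes "continuous_on {0..m} a" "x \<in> {0..m}"
  shows "((\<lambda>x. exp (prim a x)) has_vector_derivative a x * exp (prim a x)) (at x within {0..m})"
proof -
  have "((exp \<circ> prim a) has_vector_derivative a x * exp (prim a x)) (at x within {0..m})"
    by (rule field_vector_diff_chain_within[OF prim_deriv[OF assms]])
       (auto intro: has_field_derivative_at_within DERIV_exp)
  then show ?thesis by (simp add: o_def)
qed

lemma exp_neg_prim_deriv:
  assumes "continuous_on {0..m} a" "x \<in> {0..m}"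
  shows "((\<lambda>x. exp (- prim a x)) has_vector_derivative - a x * exp (- prim a x)) (at x within {0..m})"
proof -
  have d: "((\<lambda>x. - prim a x) has_vector_derivative - a x) (at x within {0..m})"
    using prim_deriv[OF assms] by (rule has_vector_derivative_minus)
  have "((exp \<circ> (\<lambda>x. - prim a x)) has_vector_derivative - a x * exp (- prim a x)) (at x within {0..m})"
    by (rule field_vector_diff_chain_within[OF d])
       (auto intro: has_field_derivative_at_within DERIV_exp)
  then show ?thesis by (simp add: o_def)
qed

text \<open>Uniqueness for the homogeneous Volterra equation d = int_0^x a d:
  the product exp(-prim a) * int_0^x a d has derivative zero.\<close>
lemma homogeneous_volterra_zero:
  fixes a d :: "real \<Rightarrow> complex"
  assumes a: "continuous_on {0..m} a" and d: "continuous_on {0..m} d"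
    and eq: "\<And>x. x \<in> {0..m} \<Longrightarrow> d x = integral {0..x} (\<lambda>t. a t * d t)"
    and x: "x \<in> {0..m}"
  shows "d x = 0"
proof -
  define D where "D = (\<lambda>x. integral {0..x} (\<lambda>t. a t * d t))"
  have ad: "continuous_on {0..m} (\<lambda>t. a t * d t)"
    using a d by (intro continuous_intros)
  have Dd: "D y = d y" if "y \<in> {0..m}" for y using eq[OF that] by (simp add: D_def)
  have D': "(D has_vector_derivative a y * D y) (at y within {0..m})" if "y \<in> {0..m}" for y
    using integral_has_vector_derivative[OF ad that] Dd[OF that] by (simp add: D_def)
  define F where "F = (\<lambda>y. exp (- prim a y) * D y)"
  have F': "(F has_vector_derivative 0) (at y within {0..m})" if "y \<in> {0..m}" for y
  proof -
    have "(F has_vector_derivative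
        (exp (- prim a y) * (a y * D y) + (- a y * exp (- prim a y)) * D y)) (at y within {0..m})"
      unfolding F_def by (rule has_vector_derivative_mult[OF exp_neg_prim_deriv[OF a that] D'[OF that]])
    then show ?thesis by (simp add: algebra_simps)
  qed
  have "((\<lambda>_. 0) has_integral (F x - F 0)) {0..x}"
    using x by (intro fundamental_theorem_of_calculus has_vector_derivative_within_subset[OF F']) auto
  then have "F x = F 0"
    using has_integral_unique has_integral_0 by force
  then have "D x = 0" by (simp add: F_def D_def)
  then show ?thesis using Dd[OF x] by simp
qed

text \<open>Variation of constants: the solution of p' = a p + b, p(0) = p0, written with
  B = int_0^x b so that only integrability of b is needed.\<close>
definition voc :: "(real \<Rightarrow> complex) \<Rightarrow> (real \<Rightarrow> complex) \<Rightarrow> complex \<Rightarrow> real \<Rightarrow> complex" where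
  "voc a b p0 x = integral {0..x} b +
     exp (prim a x) * (p0 + integral {0..x} (\<lambda>t. exp (- prim a t) * a t * integral {0..t} b))"

lemma voc_0 [simp]: "voc a b p0 0 = p0"
  by (simp add: voc_def)

lemma voc_linear: "voc a b p0 x = p0 * exp (prim a x) + voc a b 0 x"
  by (simp add: voc_def algebra_simps)

lemma voc_solves:
  fixes a b :: "real \<Rightarrow> complex"
  assumes a: "continuous_on {0..m} a" and b: "b integrable_on {0..m}"
  shows "continuous_on {0..m} (voc a b p0)"
    and "\<And>x. x \<in> {0..m} \<Longrightarrow> voc a b p0 x = p0 + integral {0..x} (\<lambda>t. a t * voc a b p0 t + b t)"
proof -
  define B where "B = (\<lambda>x. integral {0..x} b)"
  have Bc: "continuous_on {0..m} B" unfolding B_def by (rule indefinite_integral_continuous_1[OF b])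
  define h where "h = (\<lambda>t. exp (- prim a t) * a t * B t)"
  have hc: "continuous_on {0..m} h"
    unfolding h_def using a Bc continuous_on_prim[OF a] by (intro continuous_intros)
  define w where "w = (\<lambda>x. exp (prim a x) * (p0 + integral {0..x} h))"
  have voc_eq: "voc a b p0 = (\<lambda>x. B x + w x)" by (simp add: voc_def fun_eq_iff B_def w_def h_def)
  have w': "(w has_vector_derivative a y * B y + a y * w y) (at y within {0..m})"
    if y: "y \<in> {0..m}" for y
  proof -
    have "(w has_vector_derivative
        (exp (prim a y) * h y + (a y * exp (prim a y)) * (p0 + integral {0..y} h))) (at y within {0..m})"
      unfolding w_def
      using has_vector_derivative_add[OF has_vector_derivative_const integral_has_vector_derivative[OF hc y]]
      by (intro has_vector_derivative_mult exp_prim_deriv[OF a y]) simp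
    moreover have "exp (prim a y) * h y = a y * B y"
      unfolding h_def by (metis exp_minus_inverse mult.assoc mult_1_left)
    ultimately show ?thesis unfolding w_def by (simp add: distrib_left distrib_right mult.assoc)
  qed
  have wc: "continuous_on {0..m} w" by (rule continuous_on_vector_derivative, rule w')
  show vc: "continuous_on {0..m} (voc a b p0)" unfolding voc_eq using Bc wc by (intro continuous_intros)
  fix x assume x: "x \<in> {0..m}"
  have sub: "{0..x} \<subseteq> {0..m}" using x by auto
  have "((\<lambda>t. a t * B t + a t * w t) has_integral (w x - w 0)) {0..x}"
    using x by (intro fundamental_theorem_of_calculus has_vector_derivative_within_subset[OF w']) auto
  then have I1: "integral {0..x} (\<lambda>t. a t * voc a b p0 t) = w x - p0"
    by (simp add: integral_unique voc_eq distrib_left w_def)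
  have i1: "(\<lambda>t. a t * voc a b p0 t) integrable_on {0..x}"
    by (rule integrable_continuous_interval, rule continuous_on_subset[OF _ sub]) (intro continuous_intros a vc)
  have "integral {0..x} (\<lambda>t. a t * voc a b p0 t + b t) = integral {0..x} (\<lambda>t. a t * voc a b p0 t) + B x"
    using integral_add[OF i1 integrable_on_subinterval[OF b sub]] by (simp add: B_def)
  then show "voc a b p0 x = p0 + integral {0..x} (\<lambda>t. a t * voc a b p0 t + b t)"
    using I1 by (simp add: voc_eq)
qed

lemma voc_unique:
  fixes a b p :: "real \<Rightarrow> complex"
  assumes a: "continuous_on {0..m} a" and b: "b integrable_on {0..m}"
    and p: "continuous_on {0..m} p"
    and eq: "\<And>x. x \<in> {0..m} \<Longrightarrow> p x = p 0 + integral {0..x} (\<lambda>t. a t * p t + b t)"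
    and x: "x \<in> {0..m}"
  shows "p x = voc a b (p 0) x"
proof -
  define S where "S = voc a b (p 0)"
  have Sc: "continuous_on {0..m} S" unfolding S_def by (rule voc_solves(1)[OF a b])
  have Seq: "\<And>x. x \<in> {0..m} \<Longrightarrow> S x = p 0 + integral {0..x} (\<lambda>t. a t * S t + b t)"
    unfolding S_def by (rule voc_solves(2)[OF a b])
  have "p y - S y = 0" if y: "y \<in> {0..m}" for y
  proof (rule homogeneous_volterra_zero[OF a _ _ y])
    show "continuous_on {0..m} (\<lambda>y. p y - S y)" using p Sc by (intro continuous_intros)
    fix x assume x: "x \<in> {0..m}"
    have sub: "{0..x} \<subseteq> {0..m}" using x by auto
    have ib: "b integrable_on {0..x}" using integrable_on_subinterval[OF b sub] .
    have ip: "(\<lambda>t. a t * p t + b t) integrable_on {0..x}"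
      by (intro integrable_add ib integrable_continuous_interval continuous_on_subset[OF _ sub]
            continuous_intros a p)
    have iS: "(\<lambda>t. a t * S t + b t) integrable_on {0..x}"
      by (intro integrable_add ib integrable_continuous_interval continuous_on_subset[OF _ sub]
            continuous_intros a Sc)
    have "p x - S x = integral {0..x} (\<lambda>t. (a t * p t + b t) - (a t * S t + b t))"
      using eq[OF x] Seq[OF x] integral_diff[OF ip iS] by simp
    also have "\<dots> = integral {0..x} (\<lambda>t. a t * (p t - S t))"
      by (simp add: algebra_simps)
    finally show "p x - S x = integral {0..x} (\<lambda>t. a t * (p t - S t))" .
  qed
  from this[OF x] show ?thesis by (simp add: S_def)
qed

lemma norm_integral_initial_le:
  fixes b :: "real \<Rightarrow> complex"
  assumes b: "b absolutely_integrable_on {0..m}" and x: "x \<in> {0..m}"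
  shows "norm (integral {0..x} b) \<le> integral {0..m} (\<lambda>t. norm (b t))"
proof -
  have sub: "{0..x} \<subseteq> {0..m}" using x by auto
  have bi: "b integrable_on {0..m}" "(\<lambda>t. norm (b t)) integrable_on {0..m}"
    using b absolutely_integrable_on_def by blast+
  have "norm (integral {0..x} b) \<le> integral {0..x} (\<lambda>t. norm (b t))"
    by (rule integral_norm_bound_integral) (use integrable_on_subinterval[OF _ sub] bi in auto)
  also have "\<dots> \<le> integral {0..m} (\<lambda>t. norm (b t))"
    by (rule integral_subset_le[OF sub]) (use integrable_on_subinterval[OF _ sub] bi in auto)
  finally show ?thesis .
qed

lemma norm_prim_le:
  assumes a: "continuous_on {0..m} a" and Ma: "\<And>t. t \<in> {0..m} \<Longrightarrow> norm (a t) \<le> Ma"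
    and x: "x \<in> {0..m}"
  shows "norm (prim a x) \<le> Ma * m"
proof -
  have sub: "{0..x} \<subseteq> {0..m}" using x by auto
  have "norm (prim a x) \<le> integral {0..x} (\<lambda>_. Ma)"
    unfolding prim_def
    by (rule integral_norm_bound_integral)
       (use Ma sub integrable_continuous_interval[OF continuous_on_subset[OF a sub]] in auto)
  also have "\<dots> = x * Ma" using x by simp
  also have "\<dots> \<le> m * Ma"
    using x order_trans[OF norm_ge_zero Ma[OF x]] by (intro mult_right_mono) auto
  finally show ?thesis by (simp add: mult.commute)
qed

lemma voc_bound:
  fixes a :: "real \<Rightarrow> complex"
  assumes a: "continuous_on {0..m} a" and m: "0 \<le> m"
  obtains C M where "C \<ge> 0" "M \<ge> 0" "\<And>x. x \<in> {0..m} \<Longrightarrow> norm (exp (prim a x)) \<le> M"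
    "\<And>x b. b absolutely_integrable_on {0..m} \<Longrightarrow> x \<in> {0..m} \<Longrightarrow>
        norm (voc a b 0 x) \<le> C * integral {0..m} (\<lambda>t. norm (b t))"
proof -
  obtain Ma where Ma: "Ma \<ge> 0" "\<And>t. t \<in> {0..m} \<Longrightarrow> norm (a t) \<le> Ma"
    using continuous_on_compact_bound[OF compact_Icc a] by metis
  define M where "M = exp (Ma * m)"
  have M0: "M \<ge> 0" by (simp add: M_def)
  have prim_le: "norm (prim a x) \<le> Ma * m" if "x \<in> {0..m}" for x
    by (rule norm_prim_le[OF a]) (use Ma that in auto)
  have E1: "norm (exp (prim a x)) \<le> M" if "x \<in> {0..m}" for x
    using norm_exp[of "prim a x"] prim_le[OF that] unfolding M_def by (meson exp_le_cancel_iff order_trans)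
  have E2: "norm (exp (- prim a x)) \<le> M" if "x \<in> {0..m}" for x
    using norm_exp[of "- prim a x"] prim_le[OF that] unfolding M_def
    by (metis norm_minus_cancel exp_le_cancel_iff order_trans)
  define C where "C = 1 + M * (m * (M * Ma))"
  have C0: "C \<ge> 0" unfolding C_def using M0 Ma m by simp
  show ?thesis
  proof (rule that[OF C0 M0 E1])
    fix x and b :: "real \<Rightarrow> complex"
    assume b: "b absolutely_integrable_on {0..m}" and x: "x \<in> {0..m}"
    define N where "N = integral {0..m} (\<lambda>t. norm (b t))"
    have sub: "{0..x} \<subseteq> {0..m}" using x by auto
    have bi: "b integrable_on {0..m}" using b absolutely_integrable_on_def by blast
    have Bb: "norm (integral {0..t} b) \<le> N" if "t \<in> {0..m}" for t
      using norm_integral_initial_le[OF b that] by (simp add: N_def)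
    have N0: "N \<ge> 0" using Bb[of 0] m by (smt (verit) atLeastAtMost_iff norm_ge_zero)
    define h where "h = (\<lambda>t. exp (- prim a t) * a t * integral {0..t} b)"
    have hc: "continuous_on {0..m} h"
      unfolding h_def using indefinite_integral_continuous_1[OF bi] continuous_on_prim[OF a] a
      by (intro continuous_intros)
    have hb: "norm (h t) \<le> M * Ma * N" if "t \<in> {0..m}" for t
      unfolding h_def norm_mult
      using E2[OF that] Ma(2)[OF that] Bb[OF that] M0 Ma(1) N0 by (intro mult_mono) auto
    have "norm (integral {0..x} h) \<le> integral {0..x} (\<lambda>_. M * Ma * N)"
      by (rule integral_norm_bound_integral)
         (use hb sub integrable_continuous_interval[OF continuous_on_subset[OF hc sub]] in auto)
    also have "\<dots> = x * (M * Ma * N)" using x by simp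
    also have "\<dots> \<le> m * (M * Ma * N)" using x M0 Ma N0 by (intro mult_right_mono) auto
    finally have Ib: "norm (integral {0..x} h) \<le> m * (M * Ma * N)" .
    have "voc a b 0 x = integral {0..x} b + exp (prim a x) * integral {0..x} h"
      unfolding voc_def h_def by simp
    then have "norm (voc a b 0 x) \<le> norm (integral {0..x} b) + norm (exp (prim a x)) * norm (integral {0..x} h)"
      by (metis norm_mult norm_triangle_ineq)
    also have "\<dots> \<le> N + M * (m * (M * Ma * N))"
      using Bb[OF x] E1[OF x] Ib M0 by (intro add_mono mult_mono) auto
    also have "\<dots> = C * N" by (simp add: C_def algebra_simps)
    finally show "norm (voc a b 0 x) \<le> C * integral {0..m} (\<lambda>t. norm (b t))" by (simp add: N_def)
  qed
qed

lemma integral_pos_continuous: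
  fixes f :: "real \<Rightarrow> real"
  assumes ab: "a < b" and c: "continuous_on {a..b} f" and pos: "\<And>x. x \<in> {a..b} \<Longrightarrow> 0 < f x"
  shows "0 < integral {a..b} f"
proof -
  obtain x0 where x0: "x0 \<in> {a..b}" "\<And>y. y \<in> {a..b} \<Longrightarrow> f x0 \<le> f y"
    using continuous_attains_inf[OF compact_Icc _ c] ab by auto
  have "(b - a) * f x0 = integral {a..b} (\<lambda>_. f x0)" using ab by simp
  also have "\<dots> \<le> integral {a..b} f"
    by (rule integral_le) (use x0 integrable_continuous_interval[OF c] in auto)
  finally show ?thesis using ab pos[OF x0(1)] by (meson diff_gt_0_iff_gt less_le_trans mult_pos_pos)
qed

lemma continuous_on_slice:
  assumes "continuous_on ({0..m} \<times> ({0..} \<times> {0..})) (\<lambda>(s, J, A). f s J A)"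
    and "0 \<le> J" "0 \<le> A"
  shows "continuous_on {0..m} (\<lambda>s. f s J A)"
proof -
  have "continuous_on {0..m} ((\<lambda>(s, J, A). f s J A) \<circ> (\<lambda>s. (s, J, A)))"
    by (rule continuous_on_compose[OF _ continuous_on_subset[OF assms(1)]])
       (use assms in \<open>auto intro!: continuous_intros\<close>)
  then show ?thesis by (simp add: o_def)
qed

lemma continuous_on_snd_comp:
  assumes "continuous_on S f"
  shows "continuous_on (U \<times> S) (\<lambda>x. f (snd x))"
  by (rule continuous_on_compose2[OF assms continuous_on_snd]) auto

lemma continuous_on_uncurry3:
  assumes "continuous_on S (\<lambda>(s, J, A). f s J A)"
  shows "continuous_on S (\<lambda>x. f (fst x) (fst (snd x)) (snd (snd x)))"
  using assms by (simp add: case_prod_beta)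

lemma clamp_fixed_point:
  fixes a b x g :: real
  assumes "a \<le> x" "x \<le> b" "max a (min b (x - g)) = x" "x = a \<Longrightarrow> g \<le> 0" "x = b \<Longrightarrow> 0 \<le> g"
  shows "g = 0"
  using assms unfolding max_def min_def by (smt (verit))

section \<open>The model operator for frozen population levels\<close>

locale population_model =
  fixes \<beta> \<gamma> \<gamma>s \<mu> :: "real \<Rightarrow> real \<Rightarrow> real \<Rightarrow> real"
    and l m \<gamma>0 :: real
  assumes lm: "0 < l" "l < m"
    and cont_\<beta>: "continuous_on ({0..m} \<times> ({0..} \<times> {0..})) (\<lambda>(s, J, A). \<beta> s J A)"
    and cont_\<gamma>: "continuous_on ({0..m} \<times> ({0..} \<times> {0..})) (\<lambda>(s, J, A). \<gamma> s J A)"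
    and cont_\<mu>: "continuous_on ({0..m} \<times> ({0..} \<times> {0..})) (\<lambda>(s, J, A). \<mu> s J A)"
    and cont_\<gamma>s: "continuous_on ({0..m} \<times> ({0..} \<times> {0..})) (\<lambda>(s, J, A). \<gamma>s s J A)"
    and \<beta>_nonneg: "\<And>s J A. s \<in> {0..m} \<Longrightarrow> 0 \<le> J \<Longrightarrow> 0 \<le> A \<Longrightarrow> 0 \<le> \<beta> s J A"
    and \<gamma>0: "0 < \<gamma>0" "\<And>s J A. s \<in> {0..m} \<Longrightarrow> 0 \<le> J \<Longrightarrow> 0 \<le> A \<Longrightarrow> \<gamma>0 \<le> \<gamma> s J A"
begin

text \<open>The equation z p - Psi p = g is p' = drift z * p + source g.\<close>
definition drift :: "real \<Rightarrow> real \<Rightarrow> complex \<Rightarrow> real \<Rightarrow> complex" where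
  "drift J A z t = - (of_real (\<gamma>s t J A + \<mu> t J A) + z) / of_real (\<gamma> t J A)"

definition source :: "real \<Rightarrow> real \<Rightarrow> (real \<Rightarrow> complex) \<Rightarrow> real \<Rightarrow> complex" where
  "source J A g t = g t / of_real (\<gamma> t J A)"

lemma source_zero [simp]: "source J A (\<lambda>_. 0) = (\<lambda>_. 0)"
  by (simp add: source_def fun_eq_iff)

lemma m_pos: "0 < m"
  using lm by simp

lemma lm_sub: "{l..m} \<subseteq> {0..m}"
  using lm by auto

lemma \<gamma>_pos: "s \<in> {0..m} \<Longrightarrow> 0 \<le> J \<Longrightarrow> 0 \<le> A \<Longrightarrow> 0 < \<gamma> s J A"
  using \<gamma>0 by (meson less_le_trans)

lemma \<gamma>_ne: "s \<in> {0..m} \<Longrightarrow> 0 \<le> J \<Longrightarrow> 0 \<le> A \<Longrightarrow> \<gamma> s J A \<noteq> 0"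
  using \<gamma>_pos by force

lemma coefficients_continuous:
  assumes "0 \<le> J" "0 \<le> A"
  shows "continuous_on {0..m} (\<lambda>s. \<beta> s J A)" "continuous_on {0..m} (\<lambda>s. \<gamma> s J A)"
    "continuous_on {0..m} (\<lambda>s. \<mu> s J A)" "continuous_on {0..m} (\<lambda>s. \<gamma>s s J A)"
  using continuous_on_slice[OF cont_\<beta> assms] continuous_on_slice[OF cont_\<gamma> assms]
    continuous_on_slice[OF cont_\<mu> assms] continuous_on_slice[OF cont_\<gamma>s assms] by auto

lemma drift_continuous:
  assumes "0 \<le> J" "0 \<le> A"
  shows "continuous_on {0..m} (drift J A z)"
  unfolding drift_def using coefficients_continuous[OF assms]
  by (intro continuous_intros) (auto simp: \<gamma>_ne assms)

lemma source_absolutely_integrable: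
  assumes J: "0 \<le> J" "0 \<le> A" and g: "g absolutely_integrable_on {0..m}"
  shows "source J A g absolutely_integrable_on {0..m}"
proof -
  have c: "continuous_on {0..m} (\<lambda>t. inverse (complex_of_real (\<gamma> t J A)))"
    using coefficients_continuous[OF J] by (intro continuous_intros) (auto simp: \<gamma>_ne J)
  obtain B where "\<And>t. t \<in> {0..m} \<Longrightarrow> norm (inverse (complex_of_real (\<gamma> t J A))) \<le> B"
    using continuous_on_compact_bound[OF compact_Icc c] by metis
  then have bd: "bounded ((\<lambda>t. inverse (complex_of_real (\<gamma> t J A))) ` {0..m})"
    unfolding bounded_iff by (intro exI[of _ B]) auto
  have "(\<lambda>t. inverse (complex_of_real (\<gamma> t J A)) * g t) absolutely_integrable_on {0..m}"
    by (rule absolutely_integrable_bounded_measurable_product[OF bilinear_times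
          continuous_imp_measurable_on_sets_lebesgue[OF c] _ bd g]) auto
  then show ?thesis unfolding source_def by (simp add: divide_inverse_commute)
qed

lemma source_norm_le:
  assumes J: "0 \<le> J" "0 \<le> A" and g: "g absolutely_integrable_on {0..m}"
  shows "integral {0..m} (\<lambda>t. norm (source J A g t)) \<le> integral {0..m} (\<lambda>t. norm (g t)) / \<gamma>0"
proof -
  have i1: "(\<lambda>t. norm (source J A g t)) integrable_on {0..m}"
    using source_absolutely_integrable[OF J g] absolutely_integrable_on_def by blast
  have i2: "(\<lambda>t. norm (g t) / \<gamma>0) integrable_on {0..m}"
    using g absolutely_integrable_on_def integrable_on_divide by blast
  have "integral {0..m} (\<lambda>t. norm (source J A g t)) \<le> integral {0..m} (\<lambda>t. norm (g t) / \<gamma>0)"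
  proof (rule integral_le[OF i1 i2])
    fix t assume t: "t \<in> {0..m}"
    have "norm (source J A g t) = norm (g t) / \<gamma> t J A"
      unfolding source_def using \<gamma>_pos[OF t J] by (simp add: norm_divide)
    also have "\<dots> \<le> norm (g t) / \<gamma>0"
      using \<gamma>0(1) \<gamma>0(2)[OF t J] by (intro divide_left_mono) auto
    finally show "norm (source J A g t) \<le> norm (g t) / \<gamma>0" .
  qed
  then show ?thesis
    by (simp add: divide_inverse integral_mult_left)
qed

lemma psi_pointwise_iff:
  assumes s: "s \<in> {0..m}" and J: "0 \<le> J" "0 \<le> A"
  shows "f = - (complex_of_real (\<gamma>s s J A) * p + complex_of_real (\<gamma> s J A) * q) - complex_of_real (\<mu> s J A) * p
     \<longleftrightarrow> q = drift J A z s * p + (z * p - f) / complex_of_real (\<gamma> s J A)"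
proof -
  have ne: "complex_of_real (\<gamma> s J A) \<noteq> 0" using \<gamma>_pos[OF s J] by simp
  have "f = - (complex_of_real (\<gamma>s s J A) * p + complex_of_real (\<gamma> s J A) * q) - complex_of_real (\<mu> s J A) * p
     \<longleftrightarrow> complex_of_real (\<gamma> s J A) * q = - (of_real (\<gamma>s s J A + \<mu> s J A) + z) * p + (z * p - f)"
    unfolding of_real_add by (intro iffI; algebra)
  also have "\<dots> \<longleftrightarrow> q = drift J A z s * p + (z * p - f) / complex_of_real (\<gamma> s J A)"
    unfolding drift_def using ne by (auto simp: field_simps)
  finally show ?thesis .
qed

lemma graph_of_voc:
  assumes J: "0 \<le> J" "0 \<le> A" and g: "g absolutely_integrable_on {0..m}"
    and peq: "\<And>x. x \<in> {0..m} \<Longrightarrow> p x = voc (drift J A z) (source J A g) p0 x"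
    and birth: "complex_of_real (\<gamma> 0 J A) * p0 = integral {l..m} (\<lambda>s. complex_of_real (\<beta> s J A) * p s)"
  shows "psi_graph \<beta> \<gamma> \<gamma>s \<mu> l m J A p (\<lambda>s. z * p s - g s)"
proof -
  define a where "a = drift J A z"
  define b where "b = source J A g"
  have ac: "continuous_on {0..m} a" unfolding a_def by (rule drift_continuous[OF J])
  have bai: "b absolutely_integrable_on {0..m}" unfolding b_def by (rule source_absolutely_integrable[OF J g])
  then have bi: "b integrable_on {0..m}" using absolutely_integrable_on_def by blast
  have pc: "continuous_on {0..m} p"
    by (rule continuous_on_eq[OF voc_solves(1)[OF ac bi]]) (use peq in \<open>auto simp: a_def b_def\<close>)
  have p0: "p 0 = p0" using peq[of 0] m_pos by simp
  define q where "q = (\<lambda>t. a t * p t + b t)"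
  have qi: "q absolutely_integrable_on {0..m}"
    unfolding q_def
    by (intro set_integral_add(1) bai absolutely_integrable_continuous_real continuous_intros ac pc)
  have qeq: "p x = p 0 + integral {0..x} q" if x: "x \<in> {0..m}" for x
  proof -
    have "p x = p0 + integral {0..x} (\<lambda>t. a t * voc a b p0 t + b t)"
      using voc_solves(2)[OF ac bi x] peq[OF x] by (simp add: a_def b_def)
    also have "integral {0..x} (\<lambda>t. a t * voc a b p0 t + b t) = integral {0..x} q"
      unfolding q_def by (rule integral_cong) (use x peq in \<open>auto simp: a_def b_def\<close>)
    finally show ?thesis using p0 by simp
  qed
  have fi: "(\<lambda>s. z * p s - g s) absolutely_integrable_on {0..m}"
    by (intro set_integral_diff(1) g absolutely_integrable_continuous_real continuous_intros pc)
  have pointwise: "z * p s - g s = - (complex_of_real (\<gamma>s s J A) * p s + complex_of_real (\<gamma> s J A) * q s)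
           - complex_of_real (\<mu> s J A) * p s" if s: "s \<in> {0..m}" for s
    unfolding psi_pointwise_iff[OF s J, where z = z] by (simp add: q_def a_def b_def source_def)
  then have "{s\<in>{0..m}. z * p s - g s \<noteq>
           - (complex_of_real (\<gamma>s s J A) * p s + complex_of_real (\<gamma> s J A) * q s)
           - complex_of_real (\<mu> s J A) * p s} = {}" by blast
  then have neg: "negligible {s\<in>{0..m}. z * p s - g s \<noteq>
           - (complex_of_real (\<gamma>s s J A) * p s + complex_of_real (\<gamma> s J A) * q s)
           - complex_of_real (\<mu> s J A) * p s}" by (simp only: negligible_empty)
  have W: "W11 m p" unfolding W11_def using qi qeq by blast
  show ?thesis
    unfolding psi_graph_def psi_dom_def using W birth p0 fi qi qeq neg by blast
qed

lemma voc_of_graph: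
  assumes J: "0 \<le> J" "0 \<le> A" and G: "psi_graph \<beta> \<gamma> \<gamma>s \<mu> l m J A p f"
  shows "continuous_on {0..m} p" "(\<lambda>s. z * p s - f s) absolutely_integrable_on {0..m}"
    "\<And>x. x \<in> {0..m} \<Longrightarrow> p x = voc (drift J A z) (source J A (\<lambda>s. z * p s - f s)) (p 0) x"
proof -
  define N where "N q = {s\<in>{0..m}. f s \<noteq>
           - (complex_of_real (\<gamma>s s J A) * p s + complex_of_real (\<gamma> s J A) * q s)
           - complex_of_real (\<mu> s J A) * p s}" for q
  from G obtain q where fi: "f absolutely_integrable_on {0..m}"
    and qi: "q absolutely_integrable_on {0..m}"
    and qeq: "\<And>x. x\<in>{0..m} \<Longrightarrow> p x = p 0 + integral {0..x} q"
    and neg: "negligible (N q)"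
    unfolding psi_graph_def N_def by blast
  have qint: "q integrable_on {0..m}" using qi absolutely_integrable_on_def by blast
  show pc: "continuous_on {0..m} p"
  proof (rule continuous_on_eq[of _ "\<lambda>x. p 0 + integral {0..x} q"])
    show "continuous_on {0..m} (\<lambda>x. p 0 + integral {0..x} q)"
      by (intro continuous_intros indefinite_integral_continuous_1[OF qint])
    show "\<And>x. x \<in> {0..m} \<Longrightarrow> p 0 + integral {0..x} q = p x" using qeq by metis
  qed
  define g where "g = (\<lambda>s. z * p s - f s)"
  show gi: "(\<lambda>s. z * p s - f s) absolutely_integrable_on {0..m}"
    by (intro set_integral_diff(1) fi absolutely_integrable_continuous_real continuous_intros pc)
  define a where "a = drift J A z"
  define b where "b = source J A g"
  have ac: "continuous_on {0..m} a" unfolding a_def by (rule drift_continuous[OF J])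
  have bi: "b integrable_on {0..m}"
    using source_absolutely_integrable[OF J gi] absolutely_integrable_on_def unfolding b_def g_def by blast
  have qa: "q t = a t * p t + b t" if t: "t \<in> {0..m} - N q" for t
  proof -
    have tm: "t \<in> {0..m}" using t by auto
    have "f t = - (complex_of_real (\<gamma>s t J A) * p t + complex_of_real (\<gamma> t J A) * q t)
           - complex_of_real (\<mu> t J A) * p t"
      using t by (simp add: N_def)
    then show ?thesis
      unfolding psi_pointwise_iff[OF tm J, where z = z] by (simp add: a_def b_def g_def source_def)
  qed
  have eq: "p x = p 0 + integral {0..x} (\<lambda>t. a t * p t + b t)" if x: "x \<in> {0..m}" for x
  proof -
    have "integral {0..x} q = integral {0..x} (\<lambda>t. a t * p t + b t)"
      by (rule integral_spike[OF neg]) (use x qa in auto)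
    then show ?thesis using qeq[OF x] by metis
  qed
  fix x assume x: "x \<in> {0..m}"
  show "p x = voc (drift J A z) (source J A (\<lambda>s. z * p s - f s)) (p 0) x"
    using voc_unique[OF ac bi pc eq x] by (simp add: a_def b_def g_def)
qed

text \<open>Cumulative hazard including a growth rate c, survival probability, and net
  reproduction number R(J,A,c); for real c these are the real forms of
  prim (drift J A c), exp (prim (drift J A c)) and reproduction_cplx.\<close>
definition hazard :: "real \<Rightarrow> real \<Rightarrow> real \<Rightarrow> real \<Rightarrow> real" where
  "hazard J A c s = integral {0..s} (\<lambda>t. (\<gamma>s t J A + \<mu> t J A + c) / \<gamma> t J A)"

definition survival :: "real \<Rightarrow> real \<Rightarrow> real \<Rightarrow> real \<Rightarrow> real" where
  "survival J A c s = exp (- hazard J A c s)"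

definition reproduction :: "real \<Rightarrow> real \<Rightarrow> real \<Rightarrow> real" where
  "reproduction J A c = integral {l..m} (\<lambda>s. \<beta> s J A * survival J A c s)"

definition reproduction_cplx :: "real \<Rightarrow> real \<Rightarrow> complex \<Rightarrow> complex" where
  "reproduction_cplx J A z = integral {l..m} (\<lambda>s. complex_of_real (\<beta> s J A) * exp (prim (drift J A z) s))"

lemma hazard_integrand_continuous:
  assumes J: "0 \<le> J" "0 \<le> A"
  shows "continuous_on {0..m} (\<lambda>t. (\<gamma>s t J A + \<mu> t J A + c) / \<gamma> t J A)"
  using coefficients_continuous[OF J] by (intro continuous_intros) (auto simp: \<gamma>_ne J)

lemma survival_continuous:
  assumes J: "0 \<le> J" "0 \<le> A"
  shows "continuous_on {0..m} (survival J A c)"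
proof -
  have "continuous_on {0..m} (hazard J A c)"
    unfolding hazard_def[abs_def]
    by (rule indefinite_integral_continuous_1[OF integrable_continuous_interval[OF hazard_integrand_continuous[OF J]]])
  then show ?thesis unfolding survival_def[abs_def] by (intro continuous_intros)
qed

lemma survival_pos: "0 < survival J A c s"
  by (simp add: survival_def)

lemma exp_prim_drift_real:
  assumes J: "0 \<le> J" "0 \<le> A" and s: "s \<in> {0..m}"
  shows "exp (prim (drift J A (complex_of_real c)) s) = complex_of_real (survival J A c s)"
proof -
  have sub: "{0..s} \<subseteq> {0..m}" using s by auto
  have i: "(\<lambda>t. - ((\<gamma>s t J A + \<mu> t J A + c) / \<gamma> t J A)) integrable_on {0..s}"
    by (intro integrable_neg integrable_continuous_interval
          continuous_on_subset[OF hazard_integrand_continuous[OF J] sub])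
  have "drift J A (complex_of_real c) = complex_of_real \<circ> (\<lambda>t. - ((\<gamma>s t J A + \<mu> t J A + c) / \<gamma> t J A))"
    by (simp add: fun_eq_iff drift_def minus_divide_left)
  then have "prim (drift J A (complex_of_real c)) s
      = complex_of_real (integral {0..s} (\<lambda>t. - ((\<gamma>s t J A + \<mu> t J A + c) / \<gamma> t J A)))"
    unfolding prim_def by (simp only: integral_linear[OF i bounded_linear_of_real])
  also have "\<dots> = complex_of_real (- hazard J A c s)"
    by (simp add: hazard_def)
  finally show ?thesis by (simp add: survival_def flip: exp_of_real)
qed

lemma norm_exp_prim_drift_le:
  assumes J: "0 \<le> J" "0 \<le> A" and s: "s \<in> {0..m}" and z: "0 \<le> Re z"
  shows "norm (exp (prim (drift J A z) s)) \<le> survival J A 0 s"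
proof -
  have sub: "{0..s} \<subseteq> {0..m}" using s by auto
  have ai: "drift J A z integrable_on {0..s}"
    by (rule integrable_continuous_interval[OF continuous_on_subset[OF drift_continuous[OF J] sub]])
  have ki: "(\<lambda>t. - ((\<gamma>s t J A + \<mu> t J A + 0) / \<gamma> t J A)) integrable_on {0..s}"
    by (intro integrable_neg integrable_continuous_interval
          continuous_on_subset[OF hazard_integrand_continuous[OF J] sub])
  have "Re (prim (drift J A z) s) = integral {0..s} (Re \<circ> drift J A z)"
    unfolding prim_def by (rule integral_linear[OF ai bounded_linear_Re, symmetric])
  also have "\<dots> \<le> integral {0..s} (\<lambda>t. - ((\<gamma>s t J A + \<mu> t J A + 0) / \<gamma> t J A))"
  proof (rule integral_le[OF integrable_linear[OF ai bounded_linear_Re] ki])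
    fix t assume "t \<in> {0..s}"
    then have gp: "0 < \<gamma> t J A" using sub \<gamma>_pos[OF _ J] by auto
    have "(Re \<circ> drift J A z) t = - ((\<gamma>s t J A + \<mu> t J A + Re z) / \<gamma> t J A)"
      unfolding drift_def o_def by (simp add: Re_divide_of_real minus_divide_left)
    also have "\<dots> \<le> - ((\<gamma>s t J A + \<mu> t J A + 0) / \<gamma> t J A)"
      using z gp by (simp add: divide_right_mono)
    finally show "(Re \<circ> drift J A z) t \<le> - ((\<gamma>s t J A + \<mu> t J A + 0) / \<gamma> t J A)" .
  qed
  also have "\<dots> = - hazard J A 0 s" unfolding hazard_def by (rule integral_neg)
  finally show ?thesis by (simp add: survival_def)
qed

lemma norm_reproduction_cplx_le:
  assumes J: "0 \<le> J" "0 \<le> A" and z: "0 \<le> Re z"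
  shows "norm (reproduction_cplx J A z) \<le> reproduction J A 0"
  unfolding reproduction_cplx_def reproduction_def
proof (rule integral_norm_bound_integral)
  show "(\<lambda>s. complex_of_real (\<beta> s J A) * exp (prim (drift J A z) s)) integrable_on {l..m}"
    by (rule integrable_continuous_interval, rule continuous_on_subset[OF _ lm_sub])
       (intro continuous_intros coefficients_continuous[OF J] continuous_on_prim drift_continuous[OF J])
  show "(\<lambda>s. \<beta> s J A * survival J A 0 s) integrable_on {l..m}"
    by (rule integrable_continuous_interval, rule continuous_on_subset[OF _ lm_sub])
       (intro continuous_intros coefficients_continuous[OF J] survival_continuous[OF J])
  fix s assume "s \<in> {l..m}"
  then have s: "s \<in> {0..m}" using lm_sub by auto
  show "norm (complex_of_real (\<beta> s J A) * exp (prim (drift J A z) s)) \<le> \<beta> s J A * survival J A 0 s"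
    unfolding norm_mult using norm_exp_prim_drift_le[OF J s z] \<beta>_nonneg[OF s J] by (simp add: mult_left_mono)
qed

lemma norm_birth_integral_le:
  assumes J: "0 \<le> J" "0 \<le> A" and Pc: "continuous_on {0..m} P"
    and PK: "\<And>x. x \<in> {0..m} \<Longrightarrow> norm (P x) \<le> K"
  shows "norm (integral {l..m} (\<lambda>s. complex_of_real (\<beta> s J A) * P s))
           \<le> integral {l..m} (\<lambda>s. \<beta> s J A) * K"
proof -
  have "norm (integral {l..m} (\<lambda>s. complex_of_real (\<beta> s J A) * P s)) \<le> integral {l..m} (\<lambda>s. \<beta> s J A * K)"
  proof (rule integral_norm_bound_integral)
    show "(\<lambda>s. complex_of_real (\<beta> s J A) * P s) integrable_on {l..m}"
      by (rule integrable_continuous_interval, rule continuous_on_subset[OF _ lm_sub])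
         (intro continuous_intros coefficients_continuous[OF J] Pc)
    show "(\<lambda>s. \<beta> s J A * K) integrable_on {l..m}"
      by (rule integrable_continuous_interval, rule continuous_on_subset[OF _ lm_sub])
         (intro continuous_intros coefficients_continuous[OF J])
    fix s assume "s \<in> {l..m}"
    then have s: "s \<in> {0..m}" using lm_sub by auto
    show "norm (complex_of_real (\<beta> s J A) * P s) \<le> \<beta> s J A * K"
      unfolding norm_mult using PK[OF s] \<beta>_nonneg[OF s J] by (simp add: mult_left_mono)
  qed
  then show ?thesis by simp
qed

lemma birth_integral_split:
  assumes J: "0 \<le> J" "0 \<le> A" and Pc: "continuous_on {0..m} P"
  shows "integral {l..m} (\<lambda>s. complex_of_real (\<beta> s J A) * (p0 * exp (prim (drift J A z) s) + P s))
     = p0 * reproduction_cplx J A z + integral {l..m} (\<lambda>s. complex_of_real (\<beta> s J A) * P s)"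
proof -
  have i1: "(\<lambda>s. p0 * (complex_of_real (\<beta> s J A) * exp (prim (drift J A z) s))) integrable_on {l..m}"
    by (rule integrable_continuous_interval, rule continuous_on_subset[OF _ lm_sub])
       (intro continuous_intros coefficients_continuous[OF J] continuous_on_prim drift_continuous[OF J])
  have i2: "(\<lambda>s. complex_of_real (\<beta> s J A) * P s) integrable_on {l..m}"
    by (rule integrable_continuous_interval, rule continuous_on_subset[OF _ lm_sub])
       (intro continuous_intros coefficients_continuous[OF J] Pc)
  have "integral {l..m} (\<lambda>s. complex_of_real (\<beta> s J A) * (p0 * exp (prim (drift J A z) s) + P s))
     = integral {l..m} (\<lambda>s. p0 * (complex_of_real (\<beta> s J A) * exp (prim (drift J A z) s))
                          + complex_of_real (\<beta> s J A) * P s)"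
    by (simp add: algebra_simps)
  also have "\<dots> = p0 * reproduction_cplx J A z + integral {l..m} (\<lambda>s. complex_of_real (\<beta> s J A) * P s)"
    unfolding integral_add[OF i1 i2] reproduction_cplx_def by simp
  finally show ?thesis .
qed

text \<open>The characteristic function gamma(0) - R_cplx(z) decides solvability of the
  boundary condition. If R(0) < gamma(0) it stays away from 0 on Re z >= 0.\<close>
lemma characteristic_lower_bound:
  assumes J: "0 \<le> J" "0 \<le> A" and z: "0 \<le> Re z"
  shows "\<gamma> 0 J A - reproduction J A 0 \<le> norm (complex_of_real (\<gamma> 0 J A) - reproduction_cplx J A z)"
proof -
  have "norm (complex_of_real (\<gamma> 0 J A)) = \<gamma> 0 J A"
    using \<gamma>_pos[of 0, OF _ J] m_pos by simp
  then show ?thesis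
    using norm_triangle_ineq2[of "complex_of_real (\<gamma> 0 J A)" "reproduction_cplx J A z"]
      norm_reproduction_cplx_le[OF J z] by linarith
qed

text \<open>Surjectivity of z - Psi: choose the initial value so that the birth condition holds.\<close>
lemma resolvent_equation_solvable:
  assumes J: "0 \<le> J" "0 \<le> A" and D: "complex_of_real (\<gamma> 0 J A) \<noteq> reproduction_cplx J A z"
    and g: "g absolutely_integrable_on {0..m}"
  shows "\<exists>p f. psi_graph \<beta> \<gamma> \<gamma>s \<mu> l m J A p f \<and> negligible {s\<in>{0..m}. z * p s - f s \<noteq> g s}"
proof -
  define a where "a = drift J A z"
  define b where "b = source J A g"
  have bi: "b integrable_on {0..m}"
    using source_absolutely_integrable[OF J g] absolutely_integrable_on_def unfolding b_def by blast
  define P where "P = voc a b 0"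
  have ac: "continuous_on {0..m} a" unfolding a_def by (rule drift_continuous[OF J])
  have Pc: "continuous_on {0..m} P" unfolding P_def by (rule voc_solves(1)[OF ac bi])
  define p0 where "p0 = integral {l..m} (\<lambda>s. complex_of_real (\<beta> s J A) * P s)
                         / (complex_of_real (\<gamma> 0 J A) - reproduction_cplx J A z)"
  define p where "p = voc a b p0"
  have pe: "p = (\<lambda>x. p0 * exp (prim a x) + P x)"
    unfolding p_def P_def using voc_linear by blast
  have "integral {l..m} (\<lambda>s. complex_of_real (\<beta> s J A) * p s)
      = p0 * reproduction_cplx J A z + integral {l..m} (\<lambda>s. complex_of_real (\<beta> s J A) * P s)"
    unfolding pe a_def by (rule birth_integral_split[OF J Pc])
  then have birth: "complex_of_real (\<gamma> 0 J A) * p0 = integral {l..m} (\<lambda>s. complex_of_real (\<beta> s J A) * p s)"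
    using D unfolding p0_def by (simp add: field_simps)
  have "psi_graph \<beta> \<gamma> \<gamma>s \<mu> l m J A p (\<lambda>s. z * p s - g s)"
    by (rule graph_of_voc[OF J g _ birth]) (simp add: p_def a_def b_def)
  then show ?thesis by (intro exI[of _ p] exI[of _ "\<lambda>s. z * p s - g s"]) simp
qed

lemma graph_initial_value:
  fixes z :: complex
  assumes J: "0 \<le> J" "0 \<le> A" and G: "psi_graph \<beta> \<gamma> \<gamma>s \<mu> l m J A p f"
  defines "P \<equiv> voc (drift J A z) (source J A (\<lambda>s. z * p s - f s)) 0"
  shows "p 0 * (complex_of_real (\<gamma> 0 J A) - reproduction_cplx J A z)
           = integral {l..m} (\<lambda>s. complex_of_real (\<beta> s J A) * P s)"
    and "continuous_on {0..m} P"
    and "\<And>x. x \<in> {0..m} \<Longrightarrow> p x = p 0 * exp (prim (drift J A z) x) + P x"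
proof -
  have bi: "source J A (\<lambda>s. z * p s - f s) integrable_on {0..m}"
    using source_absolutely_integrable[OF J voc_of_graph(2)[OF J G]] absolutely_integrable_on_def by blast
  show Pc: "continuous_on {0..m} P"
    unfolding P_def by (rule voc_solves(1)[OF drift_continuous[OF J] bi])
  show peq: "p x = p 0 * exp (prim (drift J A z) x) + P x" if "x \<in> {0..m}" for x
    using voc_of_graph(3)[OF J G that] voc_linear[of _ _ "p 0"] unfolding P_def by metis
  have "complex_of_real (\<gamma> 0 J A) * p 0 = integral {l..m} (\<lambda>s. complex_of_real (\<beta> s J A) * p s)"
    using G unfolding psi_graph_def psi_dom_def by blast
  also have "\<dots> = integral {l..m} (\<lambda>s. complex_of_real (\<beta> s J A) * (p 0 * exp (prim (drift J A z) s) + P s))"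
  proof (rule integral_cong)
    fix s assume "s \<in> {l..m}"
    then have "s \<in> {0..m}" using lm_sub by auto
    then show "complex_of_real (\<beta> s J A) * p s
             = complex_of_real (\<beta> s J A) * (p 0 * exp (prim (drift J A z) s) + P s)"
      by (simp only: peq)
  qed
  also have "\<dots> = p 0 * reproduction_cplx J A z + integral {l..m} (\<lambda>s. complex_of_real (\<beta> s J A) * P s)"
    by (rule birth_integral_split[OF J Pc])
  finally show "p 0 * (complex_of_real (\<gamma> 0 J A) - reproduction_cplx J A z)
           = integral {l..m} (\<lambda>s. complex_of_real (\<beta> s J A) * P s)"
    by (simp add: algebra_simps)
qed

text \<open>Bounded inverse: p is bounded by its initial value (controlled through the
  characteristic function) and the solution with zero initial value.\<close>
lemma resolvent_estimate:
  assumes J: "0 \<le> J" "0 \<le> A" and R: "reproduction J A 0 < \<gamma> 0 J A" and z: "0 \<le> Re z"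
  shows "\<exists>C. \<forall>p f. psi_graph \<beta> \<gamma> \<gamma>s \<mu> l m J A p f \<longrightarrow>
           integral {0..m} (\<lambda>s. norm (p s)) \<le> C * integral {0..m} (\<lambda>s. norm (z * p s - f s))"
proof -
  obtain C M where C0: "C \<ge> 0" and M0: "M \<ge> 0"
    and CM: "\<And>x. x \<in> {0..m} \<Longrightarrow> norm (exp (prim (drift J A z) x)) \<le> M"
    and Cb: "\<And>x b. b absolutely_integrable_on {0..m} \<Longrightarrow> x \<in> {0..m} \<Longrightarrow>
        norm (voc (drift J A z) b 0 x) \<le> C * integral {0..m} (\<lambda>t. norm (b t))"
    using voc_bound[OF drift_continuous[OF J] less_imp_le[OF m_pos]] by blast
  define dd where "dd = \<gamma> 0 J A - reproduction J A 0"
  have dd: "0 < dd" using R by (simp add: dd_def)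
  define Bs where "Bs = integral {l..m} (\<lambda>s. \<beta> s J A)"
  have Bs0: "0 \<le> Bs" unfolding Bs_def
    by (rule integral_nonneg)
       (use integrable_continuous_interval[OF continuous_on_subset[OF coefficients_continuous(1)[OF J] lm_sub]]
         \<beta>_nonneg[OF _ J] lm_sub in auto)
  show ?thesis
  proof (intro exI[of _ "m * (M * (Bs * (C / \<gamma>0)) / dd + C / \<gamma>0)"] allI impI)
    fix p f assume G: "psi_graph \<beta> \<gamma> \<gamma>s \<mu> l m J A p f"
    define g where "g = (\<lambda>s. z * p s - f s)"
    have gi: "g absolutely_integrable_on {0..m}" unfolding g_def by (rule voc_of_graph(2)[OF J G])
    define NG where "NG = integral {0..m} (\<lambda>t. norm (g t))"
    have NG0: "0 \<le> NG" unfolding NG_def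
      by (rule integral_nonneg) (use gi absolutely_integrable_on_def in auto)
    define P where "P = voc (drift J A z) (source J A g) 0"
    note P = graph_initial_value[where z = z, OF J G, folded g_def, folded P_def]
    define K where "K = C / \<gamma>0 * NG"
    have K0: "0 \<le> K" unfolding K_def using C0 NG0 \<gamma>0(1) by simp
    have PK: "norm (P x) \<le> K" if x: "x \<in> {0..m}" for x
    proof -
      have "norm (P x) \<le> C * integral {0..m} (\<lambda>t. norm (source J A g t))"
        unfolding P_def by (rule Cb[OF source_absolutely_integrable[OF J gi] x])
      also have "\<dots> \<le> C * (NG / \<gamma>0)"
        using source_norm_le[OF J gi] C0 unfolding NG_def by (intro mult_left_mono) auto
      finally show ?thesis by (simp add: K_def)
    qed
    have "norm (p 0) * dd \<le> Bs * K"
    proof -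
      have "norm (p 0) * dd \<le> norm (p 0 * (complex_of_real (\<gamma> 0 J A) - reproduction_cplx J A z))"
        unfolding norm_mult dd_def by (rule mult_left_mono[OF characteristic_lower_bound[OF J z]]) simp
      also have "\<dots> \<le> Bs * K"
        unfolding P(1) Bs_def by (rule norm_birth_integral_le[OF J P(2) PK])
      finally show ?thesis .
    qed
    then have p0b: "norm (p 0) \<le> Bs * K / dd" using dd by (simp add: pos_le_divide_eq)
    have pb: "norm (p x) \<le> Bs * K / dd * M + K" if x: "x \<in> {0..m}" for x
    proof -
      have "norm (p x) \<le> norm (p 0) * norm (exp (prim (drift J A z) x)) + norm (P x)"
        unfolding P(3)[OF x] by (metis norm_mult norm_triangle_ineq)
      also have "\<dots> \<le> Bs * K / dd * M + K"
        using p0b CM[OF x] PK[OF x] M0 Bs0 K0 dd by (intro add_mono mult_mono) auto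
      finally show ?thesis .
    qed
    have "integral {0..m} (\<lambda>s. norm (p s)) \<le> integral {0..m} (\<lambda>s. Bs * K / dd * M + K)"
      by (rule integral_le)
         (use pb integrable_continuous_interval[OF continuous_on_norm[OF voc_of_graph(1)[OF J G]]] in auto)
    also have "\<dots> = m * (M * (Bs * (C / \<gamma>0)) / dd + C / \<gamma>0) * NG"
      using m_pos unfolding K_def by (simp add: algebra_simps)
    finally show "integral {0..m} (\<lambda>s. norm (p s)) \<le>
        m * (M * (Bs * (C / \<gamma>0)) / dd + C / \<gamma>0) * integral {0..m} (\<lambda>s. norm (z * p s - f s))"
      by (simp add: NG_def g_def)
  qed
qed

lemma resolvent_right_half_plane:
  assumes J: "0 \<le> J" "0 \<le> A" and R: "reproduction J A 0 < \<gamma> 0 J A" and z: "0 \<le> Re z"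
  shows "psi_resolvent \<beta> \<gamma> \<gamma>s \<mu> l m J A z"
proof -
  have D: "complex_of_real (\<gamma> 0 J A) \<noteq> reproduction_cplx J A z"
    using characteristic_lower_bound[OF J z] R by auto
  show ?thesis
    unfolding psi_resolvent_def
    using resolvent_equation_solvable[OF J D] resolvent_estimate[OF J R z] by (intro conjI allI impI)
qed

lemma survival_eigenfunction:
  assumes J: "0 \<le> J" "0 \<le> A" and Rc: "reproduction J A c = \<gamma> 0 J A"
  shows "psi_graph \<beta> \<gamma> \<gamma>s \<mu> l m J A (\<lambda>s. complex_of_real (k * survival J A c s))
           (\<lambda>s. complex_of_real c * complex_of_real (k * survival J A c s))"
proof -
  define p where "p = (\<lambda>s. complex_of_real (k * survival J A c s))"
  have zero: "(\<lambda>_::real. 0::complex) absolutely_integrable_on {0..m}"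
    by (rule absolutely_integrable_continuous_real) (rule continuous_on_const)
  have pe: "p x = voc (drift J A (complex_of_real c)) (source J A (\<lambda>_. 0)) (complex_of_real k) x"
    if "x \<in> {0..m}" for x
    using exp_prim_drift_real[OF J that, of c] by (simp add: voc_def p_def)
  have ir: "(\<lambda>s. \<beta> s J A * (k * survival J A c s)) integrable_on {l..m}"
    by (rule integrable_continuous_interval, rule continuous_on_subset[OF _ lm_sub])
       (intro continuous_intros coefficients_continuous[OF J] survival_continuous[OF J])
  have "integral {l..m} (\<lambda>s. complex_of_real (\<beta> s J A) * p s)
      = complex_of_real (integral {l..m} (\<lambda>s. \<beta> s J A * (k * survival J A c s)))"
    using integral_linear[OF ir bounded_linear_of_real] by (simp add: o_def p_def)
  also have "integral {l..m} (\<lambda>s. \<beta> s J A * (k * survival J A c s)) = k * reproduction J A c"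
    unfolding reproduction_def by (simp add: algebra_simps)
  finally have birth: "complex_of_real (\<gamma> 0 J A) * complex_of_real k
      = integral {l..m} (\<lambda>s. complex_of_real (\<beta> s J A) * p s)"
    using Rc by (simp add: mult.commute)
  have "psi_graph \<beta> \<gamma> \<gamma>s \<mu> l m J A p (\<lambda>s. complex_of_real c * p s - 0)"
    by (rule graph_of_voc[OF J zero pe birth])
  then show ?thesis by (simp add: p_def)
qed

text \<open>A real c with R(c) = gamma(0) is an eigenvalue: the positive eigenfunction
  from survival_eigenfunction violates every resolvent estimate.\<close>
lemma eigenvalue_of_reproduction:
  assumes J: "0 \<le> J" "0 \<le> A" and Rc: "reproduction J A c = \<gamma> 0 J A"
  shows "complex_of_real c \<in> psi_spectrum \<beta> \<gamma> \<gamma>s \<mu> l m J A"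
proof -
  define p where "p = (\<lambda>s. complex_of_real (1 * survival J A c s))"
  have G: "psi_graph \<beta> \<gamma> \<gamma>s \<mu> l m J A p (\<lambda>s. complex_of_real c * p s)"
    unfolding p_def by (rule survival_eigenfunction[OF J Rc])
  have pos: "0 < integral {0..m} (\<lambda>s. norm (p s))"
  proof -
    have "integral {0..m} (\<lambda>s. norm (p s)) = integral {0..m} (survival J A c)"
      by (rule integral_cong) (simp add: p_def survival_pos less_imp_le)
    then show ?thesis using integral_pos_continuous[OF m_pos survival_continuous[OF J] survival_pos] by simp
  qed
  show ?thesis
    unfolding psi_spectrum_def
  proof (rule CollectI, rule notI)
    assume "psi_resolvent \<beta> \<gamma> \<gamma>s \<mu> l m J A (complex_of_real c)"
    then obtain C where "\<And>p f. psi_graph \<beta> \<gamma> \<gamma>s \<mu> l m J A p f \<Longrightarrow>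
        integral {0..m} (\<lambda>s. norm (p s)) \<le> C * integral {0..m} (\<lambda>s. norm (complex_of_real c * p s - f s))"
      unfolding psi_resolvent_def by blast
    from this[OF G] have "integral {0..m} (\<lambda>s. norm (p s)) \<le> 0" by simp
    with pos show False by simp
  qed
qed

text \<open>Time needed to grow from size 0 to size s; the rate c enters the survival
  only through the factor exp(-c * residence).\<close>
definition residence :: "real \<Rightarrow> real \<Rightarrow> real \<Rightarrow> real" where
  "residence J A s = integral {0..s} (\<lambda>t. 1 / \<gamma> t J A)"

lemma residence_continuous:
  assumes J: "0 \<le> J" "0 \<le> A"
  shows "continuous_on {0..m} (\<lambda>t. 1 / \<gamma> t J A)" "continuous_on {0..m} (residence J A)"
proof -
  show ic: "continuous_on {0..m} (\<lambda>t. 1 / \<gamma> t J A)"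
    using coefficients_continuous[OF J] by (intro continuous_intros) (auto simp: \<gamma>_ne J)
  show "continuous_on {0..m} (residence J A)" unfolding residence_def[abs_def]
    by (rule indefinite_integral_continuous_1[OF integrable_continuous_interval[OF ic]])
qed

lemma survival_shift:
  assumes J: "0 \<le> J" "0 \<le> A" and s: "s \<in> {0..m}"
  shows "survival J A c s = survival J A 0 s * exp (- (c * residence J A s))"
proof -
  have sub: "{0..s} \<subseteq> {0..m}" using s by auto
  have i1: "(\<lambda>t. (\<gamma>s t J A + \<mu> t J A + 0) / \<gamma> t J A) integrable_on {0..s}"
    by (rule integrable_continuous_interval[OF continuous_on_subset[OF hazard_integrand_continuous[OF J] sub]])
  have i2: "(\<lambda>t. c * (1 / \<gamma> t J A)) integrable_on {0..s}"
    by (rule integrable_continuous_interval[OF continuous_on_subset[OF _ sub]])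
       (intro continuous_intros residence_continuous(1)[OF J])
  have "hazard J A c s = integral {0..s} (\<lambda>t. (\<gamma>s t J A + \<mu> t J A + 0) / \<gamma> t J A + c * (1 / \<gamma> t J A))"
    unfolding hazard_def by (rule integral_cong) (simp add: add_divide_distrib)
  also have "\<dots> = hazard J A 0 s + c * residence J A s"
    unfolding integral_add[OF i1 i2] hazard_def residence_def
    by (simp only: Henstock_Kurzweil_Integration.integral_mult_right)
  finally show ?thesis unfolding survival_def by (simp add: mult_exp_exp)
qed

lemma reproduction_shift:
  assumes J: "0 \<le> J" "0 \<le> A"
  shows "reproduction J A c
           = integral {l..m} (\<lambda>s. \<beta> s J A * (survival J A 0 s * exp (- (c * residence J A s))))"
  unfolding reproduction_def
proof (rule integral_cong)
  fix s assume "s \<in> {l..m}"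
  then have "s \<in> {0..m}" using lm_sub by auto
  then show "\<beta> s J A * survival J A c s = \<beta> s J A * (survival J A 0 s * exp (- (c * residence J A s)))"
    by (simp only: survival_shift[OF J, where c = c])
qed

lemma reproduction_continuous_rate:
  assumes J: "0 \<le> J" "0 \<le> A"
  shows "continuous_on UNIV (reproduction J A)"
proof -
  have "continuous_on (UNIV \<times> cbox l m)
      (\<lambda>x. \<beta> (snd x) J A * (survival J A 0 (snd x) * exp (- (fst x * residence J A (snd x)))))"
    unfolding box_real
    by (intro continuous_intros continuous_on_snd_comp continuous_on_subset[OF _ lm_sub]
          coefficients_continuous[OF J] survival_continuous[OF J] residence_continuous(2)[OF J])
  then have "continuous_on UNIV
      (\<lambda>c. integral (cbox l m) (\<lambda>s. \<beta> s J A * (survival J A 0 s * exp (- (c * residence J A s)))))"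
    by (intro integral_continuous_on_param) (simp add: case_prod_beta')
  then show ?thesis unfolding reproduction_shift[OF J, abs_def] box_real .
qed

text \<open>Since sizes in [l,m] take at least time l / sup gamma to reach, a large rate
  Lambda pushes R(Lambda) below gamma(0).\<close>
lemma reproduction_large_rate:
  assumes J: "0 \<le> J" "0 \<le> A" and R: "\<gamma> 0 J A < reproduction J A 0"
  shows "\<exists>\<Lambda>\<ge>0. reproduction J A \<Lambda> \<le> \<gamma> 0 J A"
proof -
  obtain \<Gamma> where \<Gamma>: "\<And>s. s \<in> {0..m} \<Longrightarrow> norm (\<gamma> s J A) \<le> \<Gamma>"
    using continuous_on_compact_bound[OF compact_Icc coefficients_continuous(2)[OF J]] by metis
  have z0: "(0::real) \<in> {0..m}" using m_pos by simp
  define g0 where "g0 = \<gamma> 0 J A"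
  have g0: "0 < g0" unfolding g0_def by (rule \<gamma>_pos[OF z0 J])
  have \<Gamma>p: "0 < \<Gamma>" using \<Gamma>[OF z0] g0 unfolding g0_def by simp
  have residence_ge: "s / \<Gamma> \<le> residence J A s" if s: "s \<in> {0..m}" for s
  proof -
    have sub: "{0..s} \<subseteq> {0..m}" using s by auto
    have "integral {0..s} (\<lambda>_. 1 / \<Gamma>) \<le> residence J A s"
      unfolding residence_def
    proof (rule integral_le)
      show "(\<lambda>t. 1 / \<gamma> t J A) integrable_on {0..s}"
        by (rule integrable_continuous_interval[OF continuous_on_subset[OF residence_continuous(1)[OF J] sub]])
      fix t assume "t \<in> {0..s}"
      then have t: "t \<in> {0..m}" using sub by auto
      show "1 / \<Gamma> \<le> 1 / \<gamma> t J A" using \<Gamma>[OF t] \<gamma>_pos[OF t J] by (simp add: frac_le)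
    qed (rule integrable_const_ivl)
    then show ?thesis using s by simp
  qed
  define h0 where "h0 = reproduction J A 0"
  define y where "y = h0 / g0"
  define \<Lambda> where "\<Lambda> = \<Gamma> * y / l"
  have y0: "0 < y" using R g0 unfolding y_def h0_def g0_def by simp
  have \<Lambda>0: "0 \<le> \<Lambda>" using \<Gamma>p y0 lm unfolding \<Lambda>_def by simp
  have "reproduction J A \<Lambda> \<le> integral {l..m} (\<lambda>s. (\<beta> s J A * survival J A 0 s) * exp (- y))"
    unfolding reproduction_shift[OF J]
  proof (rule integral_le)
    show "(\<lambda>s. \<beta> s J A * (survival J A 0 s * exp (- (\<Lambda> * residence J A s)))) integrable_on {l..m}"
      by (rule integrable_continuous_interval, rule continuous_on_subset[OF _ lm_sub])
         (intro continuous_intros coefficients_continuous[OF J] survival_continuous[OF J]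
            residence_continuous(2)[OF J])
    show "(\<lambda>s. (\<beta> s J A * survival J A 0 s) * exp (- y)) integrable_on {l..m}"
      by (rule integrable_continuous_interval, rule continuous_on_subset[OF _ lm_sub])
         (intro continuous_intros coefficients_continuous[OF J] survival_continuous[OF J])
    fix s assume sl: "s \<in> {l..m}"
    then have s: "s \<in> {0..m}" using lm_sub by auto
    have "y = \<Lambda> * (l / \<Gamma>)" unfolding \<Lambda>_def using \<Gamma>p lm by simp
    also have "\<dots> \<le> \<Lambda> * (s / \<Gamma>)" using sl \<Gamma>p \<Lambda>0 by (intro mult_left_mono divide_right_mono) auto
    also have "\<dots> \<le> \<Lambda> * residence J A s" using residence_ge[OF s] \<Lambda>0 by (intro mult_left_mono) auto
    finally have "exp (- (\<Lambda> * residence J A s)) \<le> exp (- y)" by simp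
    moreover have "0 \<le> \<beta> s J A * survival J A 0 s" using \<beta>_nonneg[OF s J] survival_pos[of J A 0 s] by simp
    ultimately show "\<beta> s J A * (survival J A 0 s * exp (- (\<Lambda> * residence J A s)))
        \<le> (\<beta> s J A * survival J A 0 s) * exp (- y)"
      by (metis mult.assoc mult_left_mono)
  qed
  also have "\<dots> = g0 * (y * exp (- y))" unfolding h0_def reproduction_def y_def using g0 by simp
  also have "\<dots> \<le> g0"
  proof -
    have "y * exp (- y) < exp y * exp (- y)" using exp_gt_self[of y] by simp
    then have "y * exp (- y) \<le> 1" by (simp add: mult_exp_exp)
    then show ?thesis using g0 by (simp add: mult_le_cancel_left1)
  qed
  finally show ?thesis using \<Lambda>0 unfolding g0_def by blast
qed

lemma positive_rate_balancing:
  assumes J: "0 \<le> J" "0 \<le> A" and R: "\<gamma> 0 J A < reproduction J A 0"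
  shows "\<exists>c>0. reproduction J A c = \<gamma> 0 J A"
proof -
  obtain \<Lambda> where \<Lambda>: "0 \<le> \<Lambda>" "reproduction J A \<Lambda> \<le> \<gamma> 0 J A"
    using reproduction_large_rate[OF J R] by blast
  have "continuous_on {0..\<Lambda>} (reproduction J A)"
    using continuous_on_subset[OF reproduction_continuous_rate[OF J]] by blast
  then obtain c where c: "0 \<le> c" "reproduction J A c = \<gamma> 0 J A"
    using IVT2'[of "reproduction J A", OF \<Lambda>(2) _ \<Lambda>(1)] R by auto
  moreover have "c \<noteq> 0" using c(2) R by auto
  ultimately have "0 < c" by simp
  then show ?thesis using c(2) by blast
qed

lemma spectral_bound_pos_imp:
  assumes J: "0 \<le> J" "0 \<le> A" and sb: "psi_spectral_bound \<beta> \<gamma> \<gamma>s \<mu> l m J A > 0"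
  shows "\<gamma> 0 J A \<le> reproduction J A 0"
proof (rule ccontr)
  assume "\<not> \<gamma> 0 J A \<le> reproduction J A 0"
  then have R: "reproduction J A 0 < \<gamma> 0 J A" by simp
  have "ereal (Re z) \<le> 0" if z: "z \<in> psi_spectrum \<beta> \<gamma> \<gamma>s \<mu> l m J A" for z
    using z resolvent_right_half_plane[OF J R, of z] unfolding psi_spectrum_def by force
  then have "psi_spectral_bound \<beta> \<gamma> \<gamma>s \<mu> l m J A \<le> 0"
    unfolding psi_spectral_bound_def by (simp add: Sup_le_iff)
  then show False using sb by simp
qed

lemma spectral_bound_neg_imp:
  assumes J: "0 \<le> J" "0 \<le> A" and sb: "psi_spectral_bound \<beta> \<gamma> \<gamma>s \<mu> l m J A < 0"
  shows "reproduction J A 0 \<le> \<gamma> 0 J A"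
proof (rule ccontr)
  assume "\<not> reproduction J A 0 \<le> \<gamma> 0 J A"
  then obtain c where c: "0 < c" "reproduction J A c = \<gamma> 0 J A"
    using positive_rate_balancing[OF J] by force
  have "ereal (Re (complex_of_real c)) \<le> psi_spectral_bound \<beta> \<gamma> \<gamma>s \<mu> l m J A"
    unfolding psi_spectral_bound_def by (intro Sup_upper imageI eigenvalue_of_reproduction[OF J c(2)])
  then have "ereal c \<le> psi_spectral_bound \<beta> \<gamma> \<gamma>s \<mu> l m J A" by simp
  then have "ereal c < 0" using sb by (rule le_less_trans)
  then show False using c(1) by simp
qed

abbreviation levels :: "(real \<times> real) set" where
  "levels \<equiv> {0..} \<times> {0..}"

text \<open>Hazard rate at c = 0 as a function of (s, J, A), and the cumulative hazard
  rescaled to the fixed interval [0,1] (t = s tau), which makes its joint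
  continuity in ((J, A), s) a parameter-integral statement.\<close>
definition hazard_rate :: "real \<times> real \<times> real \<Rightarrow> real" where
  "hazard_rate x = (\<gamma>s (fst x) (fst (snd x)) (snd (snd x)) + \<mu> (fst x) (fst (snd x)) (snd (snd x))) /
          \<gamma> (fst x) (fst (snd x)) (snd (snd x))"

definition hazard_rescaled :: "(real \<times> real) \<times> real \<Rightarrow> real" where
  "hazard_rescaled x = integral (cbox 0 1) (\<lambda>\<tau>. snd x * hazard_rate (snd x * \<tau>, fst x))"

lemma hazard_rate_joint_continuous: "continuous_on ({0..m} \<times> levels) hazard_rate"
  unfolding hazard_rate_def
  using continuous_on_uncurry3[OF cont_\<gamma>s] continuous_on_uncurry3[OF cont_\<mu>] continuous_on_uncurry3[OF cont_\<gamma>]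
  by (intro continuous_intros) (auto simp: \<gamma>_ne)

lemma hazard_rescaled_continuous: "continuous_on (levels \<times> {0..m}) hazard_rescaled"
proof -
  have "(\<lambda>x. (snd (fst x) * snd x, fst (fst x))) ` ((levels \<times> {0..m}) \<times> cbox 0 1) \<subseteq> {0..m} \<times> levels"
    by (force simp: box_real intro: order_trans[OF mult_left_le])
  then have "continuous_on ((levels \<times> {0..m}) \<times> cbox 0 1) (\<lambda>x. hazard_rate (snd (fst x) * snd x, fst (fst x)))"
    by (intro continuous_on_compose2[OF hazard_rate_joint_continuous] continuous_intros)
  then have "continuous_on ((levels \<times> {0..m}) \<times> cbox 0 1)
     (\<lambda>w. snd (fst w) * hazard_rate (snd (fst w) * snd w, fst (fst w)))"
    by (intro continuous_intros)
  then show ?thesis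
    unfolding hazard_rescaled_def[abs_def] by (intro integral_continuous_on_param) (simp add: case_prod_beta')
qed

lemma hazard_rescaled_eq:
  assumes y: "y \<in> levels" and s: "s \<in> {0..m}"
  shows "hazard (fst y) (snd y) 0 s = hazard_rescaled (y, s)"
proof -
  have J: "0 \<le> fst y" "0 \<le> snd y" using y by auto
  have "((\<lambda>\<tau>. s *\<^sub>R (\<lambda>t. (\<gamma>s t (fst y) (snd y) + \<mu> t (fst y) (snd y) + 0) / \<gamma> t (fst y) (snd y)) (s * \<tau>))
      has_integral integral {s * 0..s * 1} (\<lambda>t. (\<gamma>s t (fst y) (snd y) + \<mu> t (fst y) (snd y) + 0) / \<gamma> t (fst y) (snd y))) {0..1}"
  proof (rule has_integral_substitution[where c = 0 and d = m])
    show "(\<lambda>\<tau>. s * \<tau>) ` {0..1} \<subseteq> {0..m}"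
      using s by (auto simp: mult_le_one order_trans[OF mult_left_le])
    show "continuous_on {0..m} (\<lambda>t. (\<gamma>s t (fst y) (snd y) + \<mu> t (fst y) (snd y) + 0) / \<gamma> t (fst y) (snd y))"
      by (rule hazard_integrand_continuous[OF J])
    fix x show "((\<lambda>\<tau>. s * \<tau>) has_real_derivative s) (at x within {0..1})"
      by (auto intro!: derivative_eq_intros)
  qed (use s in auto)
  then show ?thesis
    unfolding hazard_def hazard_rescaled_def hazard_rate_def by (simp add: integral_unique box_real)
qed

lemma survival_joint_continuous:
  assumes "{c..d} \<subseteq> {0..m}"
  shows "continuous_on (levels \<times> cbox c d) (\<lambda>(y, s). survival (fst y) (snd y) 0 s)"
proof -
  have sub: "levels \<times> cbox c d \<subseteq> levels \<times> {0..m}" using assms by (auto simp: box_real)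
  have "continuous_on (levels \<times> cbox c d) (\<lambda>x. exp (- hazard_rescaled x))"
    by (intro continuous_intros continuous_on_subset[OF hazard_rescaled_continuous sub])
  then show ?thesis
  proof (rule continuous_on_eq)
    fix w assume "w \<in> levels \<times> cbox c d"
    then have "w \<in> levels \<times> {0..m}" using sub by blast
    then have "fst w \<in> levels" "snd w \<in> {0..m}" by auto
    then show "exp (- hazard_rescaled w) = (\<lambda>(y, s). survival (fst y) (snd y) 0 s) w"
      using hazard_rescaled_eq[of "fst w" "snd w"] by (simp add: survival_def case_prod_beta)
  qed
qed

lemma levels_continuous:
  shows "continuous_on levels (\<lambda>y. integral {0..l} (survival (fst y) (snd y) 0))"
    and "continuous_on levels (\<lambda>y. integral {l..m} (survival (fst y) (snd y) 0))"
    and "continuous_on levels (\<lambda>y. reproduction (fst y) (snd y) 0 - \<gamma> 0 (fst y) (snd y))"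
proof -
  show "continuous_on levels (\<lambda>y. integral {0..l} (survival (fst y) (snd y) 0))"
    using integral_continuous_on_param[OF survival_joint_continuous[of 0 l]] lm by (simp add: box_real)
  show "continuous_on levels (\<lambda>y. integral {l..m} (survival (fst y) (snd y) 0))"
    using integral_continuous_on_param[OF survival_joint_continuous[of l m]] lm by (simp add: box_real)
  have b: "continuous_on (levels \<times> cbox l m) (\<lambda>w. \<beta> (snd w) (fst (fst w)) (snd (fst w)))"
    by (rule continuous_on_compose2[OF continuous_on_uncurry3[OF cont_\<beta>], of _ "\<lambda>w. (snd w, fst w)", simplified])
       (use lm in \<open>auto intro!: continuous_intros simp: box_real\<close>)
  have e: "continuous_on (levels \<times> cbox l m) (\<lambda>w. survival (fst (fst w)) (snd (fst w)) 0 (snd w))"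
    using survival_joint_continuous[of l m] lm by (simp add: case_prod_beta')
  have "continuous_on (levels \<times> cbox l m) (\<lambda>(y, s). \<beta> s (fst y) (snd y) * survival (fst y) (snd y) 0 s)"
    using continuous_on_mult[OF b e] by (simp add: case_prod_beta')
  then have R: "continuous_on levels (\<lambda>y. reproduction (fst y) (snd y) 0)"
    unfolding reproduction_def using integral_continuous_on_param by (fastforce simp: box_real)
  have "continuous_on levels (\<lambda>y. \<gamma> 0 (fst y) (snd y))"
    by (rule continuous_on_compose2[OF continuous_on_uncurry3[OF cont_\<gamma>], of _ "\<lambda>y. (0, y)", simplified])
       (use lm in \<open>auto intro!: continuous_intros\<close>)
  with R show "continuous_on levels (\<lambda>y. reproduction (fst y) (snd y) 0 - \<gamma> 0 (fst y) (snd y))"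
    by (intro continuous_intros)
qed

lemma juvenile_mass_nonneg:
  assumes J: "0 \<le> J" "0 \<le> A"
  shows "0 \<le> integral {0..l} (survival J A 0)"
proof -
  have "{0..l} \<subseteq> {0..m}" using lm by auto
  then show ?thesis
    by (intro integral_nonneg integrable_continuous_interval
          continuous_on_subset[OF survival_continuous[OF J]]) (auto intro: less_imp_le[OF survival_pos])
qed

lemma adult_mass_pos:
  assumes J: "0 \<le> J" "0 \<le> A"
  shows "0 < integral {l..m} (survival J A 0)"
  by (rule integral_pos_continuous[OF lm(2) continuous_on_subset[OF survival_continuous[OF J] lm_sub]
        survival_pos])

definition balanced :: "real \<Rightarrow> real \<Rightarrow> bool" where
  "balanced J A \<longleftrightarrow> 0 \<le> J \<and> 0 \<le> A \<and> 0 < J + A \<and> reproduction J A 0 = \<gamma> 0 J A \<and>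
     (J + A) * integral {0..l} (survival J A 0)
       = J * (integral {0..l} (survival J A 0) + integral {l..m} (survival J A 0))"

text \<open>Brouwer's theorem on the rectangle [0,1] x [r1,r2], coordinates (x, sigma) with
  (J, A) = (x sigma, (1 - x) sigma), for a map clamping
  x := x - (x (a1 + a2) - a1) and sigma := sigma + (R(J,A,0) - gamma(0,J,A)).
  At the boundary the updates point inward, so the fixed point is interior to both
  clamps and balanced.\<close>
lemma balanced_levels_exist:
  assumes r: "0 < r1" "r1 < r2"
    and small: "\<And>J A. 0 \<le> J \<Longrightarrow> 0 \<le> A \<Longrightarrow> J + A \<le> r1 \<Longrightarrow>
                  psi_spectral_bound \<beta> \<gamma> \<gamma>s \<mu> l m J A > 0"
    and large: "\<And>J A. 0 \<le> J \<Longrightarrow> 0 \<le> A \<Longrightarrow> r2 \<le> J + A \<Longrightarrow>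
                  psi_spectral_bound \<beta> \<gamma> \<gamma>s \<mu> l m J A < 0"
  shows "\<exists>J A. balanced J A"
proof -
  define F1 where "F1 = (\<lambda>y. integral {0..l} (survival (fst y) (snd y) 0))"
  define F2 where "F2 = (\<lambda>y. integral {l..m} (survival (fst y) (snd y) 0))"
  define F3 where "F3 = (\<lambda>y. reproduction (fst y) (snd y) 0 - \<gamma> 0 (fst y) (snd y))"
  define Y where "Y = (\<lambda>w::real \<times> real. (fst w * snd w, (1 - fst w) * snd w))"
  define S where "S = {0..1::real} \<times> {r1..r2}"
  have YS: "Y ` S \<subseteq> levels" unfolding Y_def S_def using r by auto
  have Yc: "continuous_on S Y" unfolding Y_def by (intro continuous_intros)
  define G1 where "G1 = (\<lambda>w. fst w * (F1 (Y w) + F2 (Y w)) - F1 (Y w))"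
  define G2 where "G2 = (\<lambda>w. F3 (Y w))"
  define \<Phi> where "\<Phi> = (\<lambda>w. (max 0 (min 1 (fst w - G1 w)), max r1 (min r2 (snd w + G2 w))))"
  have "continuous_on S \<Phi>"
    unfolding \<Phi>_def G1_def G2_def F1_def F2_def F3_def
    by (intro continuous_intros continuous_on_compose2[OF levels_continuous(1) Yc YS]
          continuous_on_compose2[OF levels_continuous(2) Yc YS]
          continuous_on_compose2[OF levels_continuous(3) Yc YS])
  moreover have "\<Phi> \<in> S \<rightarrow> S" unfolding \<Phi>_def S_def using r by auto
  moreover have "compact S" "convex S" "S \<noteq> {}"
    unfolding S_def using r by (auto intro: compact_Times convex_Times)
  ultimately obtain w where w: "w \<in> S" "\<Phi> w = w" using brouwer by metis
  obtain x \<sigma> where w_eq: "w = (x, \<sigma>)" by fastforce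
  have x: "0 \<le> x" "x \<le> 1" and \<sigma>: "r1 \<le> \<sigma>" "\<sigma> \<le> r2" using w(1) unfolding S_def w_eq by auto
  define J where "J = x * \<sigma>"
  define A where "A = (1 - x) * \<sigma>"
  have JA: "0 \<le> J" "0 \<le> A" unfolding J_def A_def using x \<sigma> r by auto
  have JAs: "J + A = \<sigma>" unfolding J_def A_def by (simp add: algebra_simps)
  have Yw: "Y w = (J, A)" unfolding Y_def J_def A_def w_eq by simp
  have F1n: "0 \<le> F1 (Y w)" unfolding F1_def Yw using juvenile_mass_nonneg[OF JA] by simp
  have F2p: "0 < F2 (Y w)" unfolding F2_def Yw using adult_mass_pos[OF JA] by simp
  have G1_eq: "G1 w = x * (F1 (Y w) + F2 (Y w)) - F1 (Y w)" by (simp add: G1_def w_eq)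
  have G1z: "G1 w = 0"
  proof (rule clamp_fixed_point[of 0 x 1])
    show "max 0 (min 1 (x - G1 w)) = x" using w(2) unfolding \<Phi>_def w_eq by simp
    show "x = 0 \<Longrightarrow> G1 w \<le> 0" using G1_eq F1n by simp
    show "x = 1 \<Longrightarrow> 0 \<le> G1 w" using G1_eq F2p by simp
  qed (use x in auto)
  have G2z: "- G2 w = 0"
  proof (rule clamp_fixed_point[of r1 \<sigma> r2])
    show "max r1 (min r2 (\<sigma> - - G2 w)) = \<sigma>" using w(2) unfolding \<Phi>_def w_eq by simp
    show "\<sigma> = r1 \<Longrightarrow> - G2 w \<le> 0"
      using spectral_bound_pos_imp[OF JA small[OF JA]] JAs unfolding G2_def F3_def Yw by simp
    show "\<sigma> = r2 \<Longrightarrow> 0 \<le> - G2 w"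
      using spectral_bound_neg_imp[OF JA large[OF JA]] JAs unfolding G2_def F3_def Yw by simp
  qed (use \<sigma> in auto)
  have x_eq: "x * (F1 (Y w) + F2 (Y w)) = F1 (Y w)" using G1z G1_eq by simp
  have "J * (F1 (Y w) + F2 (Y w)) = \<sigma> * (x * (F1 (Y w) + F2 (Y w)))"
    unfolding J_def by (simp only: ac_simps)
  then have "(J + A) * F1 (Y w) = J * (F1 (Y w) + F2 (Y w))"
    unfolding JAs x_eq by simp
  then have "balanced J A"
    unfolding balanced_def using JA JAs \<sigma> r G2z unfolding G2_def F3_def F1_def F2_def Yw by simp
  then show ?thesis by blast
qed

text \<open>At balanced levels, the survival profile scaled to total mass J + A is a
  positive steady state whose juvenile and adult masses are J and A.\<close>
lemma steady_state_at_balanced: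
  assumes bal: "balanced J A"
  shows "\<exists>p :: real \<Rightarrow> real.
           (\<forall>s\<in>{0..m}. 0 \<le> p s) \<and>
           \<not> negligible {s\<in>{0..m}. p s \<noteq> 0} \<and>
           psi_graph \<beta> \<gamma> \<gamma>s \<mu> l m (integral {0..l} p) (integral {l..m} p)
             (\<lambda>s. complex_of_real (p s)) (\<lambda>s. 0)"
proof -
  have JA: "0 \<le> J" "0 \<le> A" and JAp: "0 < J + A"
    and Req: "reproduction J A 0 = \<gamma> 0 J A" using bal unfolding balanced_def by auto
  define a1 where "a1 = integral {0..l} (survival J A 0)"
  define a2 where "a2 = integral {l..m} (survival J A 0)"
  have ratio: "(J + A) * a1 = J * (a1 + a2)" using bal unfolding balanced_def a1_def a2_def by simp
  have a2p: "0 < a2" unfolding a2_def by (rule adult_mass_pos[OF JA])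
  have a1n: "0 \<le> a1" unfolding a1_def by (rule juvenile_mass_nonneg[OF JA])
  define c where "c = (J + A) / (a1 + a2)"
  have c0: "0 < c" unfolding c_def using a1n a2p JAp by simp
  define p where "p = (\<lambda>s. c * survival J A 0 s)"
  have pJ: "integral {0..l} p = J"
  proof -
    have "integral {0..l} p = c * a1" unfolding p_def a1_def by simp
    also have "\<dots> = J" unfolding c_def using ratio a1n a2p by (simp add: field_simps)
    finally show ?thesis .
  qed
  have pA: "integral {l..m} p = A"
  proof -
    have "integral {l..m} p = c * a2" unfolding p_def a2_def by simp
    also have "\<dots> = A" unfolding c_def using ratio a1n a2p by (simp add: field_simps)
    finally show ?thesis .
  qed
  have "psi_graph \<beta> \<gamma> \<gamma>s \<mu> l m J A (\<lambda>s. complex_of_real (p s)) (\<lambda>s. 0 * complex_of_real (p s))"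
    unfolding p_def using survival_eigenfunction[OF JA Req, of c] by simp
  then have G: "psi_graph \<beta> \<gamma> \<gamma>s \<mu> l m (integral {0..l} p) (integral {l..m} p)
      (\<lambda>s. complex_of_real (p s)) (\<lambda>s. 0)"
    unfolding pJ pA by simp
  have "{s\<in>{0..m}. p s \<noteq> 0} = cbox 0 m" unfolding p_def survival_def using c0 by (auto simp: box_real)
  then have "\<not> negligible {s\<in>{0..m}. p s \<noteq> 0}"
    using m_pos negligible_interval(1)[of 0 m] by (simp add: box_real)
  moreover have "\<forall>s\<in>{0..m}. 0 \<le> p s" unfolding p_def using c0 survival_pos by (simp add: less_imp_le)
  ultimately show ?thesis using G by blast
qed

end

theorem mainTheorem11:
  fixes \<beta> \<gamma> \<gamma>s \<mu> :: "real \<Rightarrow> real \<Rightarrow> real \<Rightarrow> real"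
    and l m \<gamma>0 r R :: real
  assumes lm: "0 < l" "l < m"
    and cont_\<beta>: "continuous_on ({0..m} \<times> ({0..} \<times> {0..})) (\<lambda>(s, J, A). \<beta> s J A)"
    and cont_\<gamma>: "continuous_on ({0..m} \<times> ({0..} \<times> {0..})) (\<lambda>(s, J, A). \<gamma> s J A)"
    and cont_\<mu>: "continuous_on ({0..m} \<times> ({0..} \<times> {0..})) (\<lambda>(s, J, A). \<mu> s J A)"
    and nonneg: "\<And>s J A. s \<in> {0..m} \<Longrightarrow> 0 \<le> J \<Longrightarrow> 0 \<le> A \<Longrightarrow>
                   0 \<le> \<beta> s J A \<and> 0 \<le> \<gamma> s J A \<and> 0 \<le> \<mu> s J A"
    and \<beta>_zero: "\<And>s J A. s \<in> {0..<l} \<Longrightarrow> 0 \<le> J \<Longrightarrow> 0 \<le> A \<Longrightarrow> \<beta> s J A = 0"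
    and \<gamma>_deriv: "\<And>s J A. s \<in> {0..m} \<Longrightarrow> 0 \<le> J \<Longrightarrow> 0 \<le> A \<Longrightarrow>
                   ((\<lambda>t. \<gamma> t J A) has_real_derivative \<gamma>s s J A) (at s within {0..m})"
    and cont_\<gamma>s: "continuous_on ({0..m} \<times> ({0..} \<times> {0..})) (\<lambda>(s, J, A). \<gamma>s s J A)"
    and \<gamma>0: "0 < \<gamma>0" "\<And>s J A. s \<in> {0..m} \<Longrightarrow> 0 \<le> J \<Longrightarrow> 0 \<le> A \<Longrightarrow> \<gamma>0 \<le> \<gamma> s J A"
    and \<beta>_pos: "\<exists>\<epsilon>>0. \<epsilon> \<le> m \<and>
                 (\<forall>J A. 0 \<le> J \<longrightarrow> 0 \<le> A \<longrightarrow> integral {m - \<epsilon>..m} (\<lambda>s. \<beta> s J A) > 0)"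
    and rR: "0 < r" "r < R"
    and small: "\<And>J A. 0 \<le> J \<Longrightarrow> 0 \<le> A \<Longrightarrow> J + A \<le> r \<Longrightarrow>
                  psi_spectral_bound \<beta> \<gamma> \<gamma>s \<mu> l m J A > 0"
    and large: "\<And>J A. 0 \<le> J \<Longrightarrow> 0 \<le> A \<Longrightarrow> R \<le> J + A \<Longrightarrow>
                  psi_spectral_bound \<beta> \<gamma> \<gamma>s \<mu> l m J A < 0"
  shows "\<exists>p :: real \<Rightarrow> real.
           (\<forall>s\<in>{0..m}. 0 \<le> p s) \<and>
           \<not> negligible {s\<in>{0..m}. p s \<noteq> 0} \<and>
           psi_graph \<beta> \<gamma> \<gamma>s \<mu> l m (integral {0..l} p) (integral {l..m} p)
             (\<lambda>s. complex_of_real (p s)) (\<lambda>s. 0)"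
proof -
  interpret population_model \<beta> \<gamma> \<gamma>s \<mu> l m \<gamma>0
    using lm cont_\<beta> cont_\<gamma> cont_\<mu> cont_\<gamma>s nonneg \<gamma>0 by unfold_locales auto
  obtain J A where "balanced J A"
    using balanced_levels_exist[OF rR small large] by blast
  then show ?thesis by (rule steady_state_at_balanced)
qed

end
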